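(* Let $\beta$ and $\lambda$ be infinite cardinals. Then the full product $\mathbb{Z}^\beta$ is not isomorphic to any subgroup of $P(\lambda,\beta)$.
   Context: $\mathbb{Z}^\kappa$ is the group of functions $x:\kappa\to\mathbb{Z}$ under pointwise addition, $\mathrm{supp}(x)=\{\xi\in\kappa:x(\xi)\neq0\}$, and for an infinite cardinal $\beta\leq\lambda^+$, $P(\lambda,\beta)=\{x\in\mathbb{Z}^\lambda:|\mathrm{supp}(x)|<\beta\}$. *)

theory Defs
  imports Main
begin

text \<open>Cardinals are represented as cardinalities of (universes of) types.
  Z^kappa is the type 'k => int with pointwise addition.\<close>

definition supp :: "('a \<Rightarrow> int) \<Rightarrow> 'a set" where
  "supp x = {\<xi>. x \<xi> \<noteq> 0}"

text \<open>P(lambda, beta) with lambda = |UNIV :: 'l set| and beta = |UNIV :: 'b set|.\<close>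
definition Pset :: "'b itself \<Rightarrow> ('l \<Rightarrow> int) set" where
  "Pset _ = {x. (card_of (supp x), card_of (UNIV :: 'b set)) \<in> ordLess}"

end

(*
  Suppose f embeds Z^\<beta> additively into vectors with fewer than \<beta> nonzero coordinates.
  Choosing for every index i a coordinate \<eta> i with f(e_i)(\<eta> i) \<noteq> 0 gives additive
  functionals \<Phi>_i x = f(x)(\<eta> i) with \<Phi>_i(e_i) \<noteq> 0.  By Specker's lemma (an additive
  functional on Z^\<beta> is nonzero on only finitely many members of a disjointly supported
  sequence) every coordinate of the image sees only finitely many unit vectors, so each c has
  \<Phi>_i c \<noteq> 0 for fewer than \<beta> indices i.  It remains to find c with \<beta> such indices.

  The residual of \<Phi>_i, obtained by subtracting \<Sigma>_j \<Phi>_i(e_j) x_j, vanishes on unit vectors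
  and, again by Specker's lemma, is nonvanishing on only boundedly many disjoint pieces of the
  index set.  If the rows with fewer than k pieces are \<beta> many, c is found by induction on k:
  were all images small, a Zorn argument on partial vectors would produce \<beta> of these rows
  whose residuals live on pieces outside them, leaving fewer pieces inside.  Otherwise \<beta> is
  uncountable (for countable \<beta> all residuals vanish, since every integer is 2^n u + 3^n v),
  and c is a single series \<Sigma>_n M_n y_n of disjointly supported vectors with quickly growing
  moduli M_n, whose n-th term takes care of the rows with fewer than n pieces.
*)
theory Submission
  imports Defs "HOL.Modules" "HOL-Library.Function_Algebras" "HOL-Library.Countable_Set"
    "HOL-Library.Disjoint_Sets"
begin

unbundle cardinal_syntax

definition unit_vec :: "'a \<Rightarrow> 'a \<Rightarrow> int" where
  "unit_vec j = (\<lambda>\<xi>. of_bool (\<xi> = j))"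

lemma sum_fun_apply: "(\<Sum>i\<in>A. f i) x = (\<Sum>i\<in>A. f i x)"
  by (induction A rule: infinite_finite_induct) auto

lemma additive_scale:
  fixes \<phi> :: "('a \<Rightarrow> int) \<Rightarrow> int"
  assumes "additive \<phi>"
  shows "\<phi> (\<lambda>\<xi>. c * x \<xi>) = c * \<phi> x"
proof (induction c rule: int_induct[where k = 0])
  case base
  show ?case using additive.zero[OF assms] by (simp add: zero_fun_def)
next
  case (step1 i)
  have "(\<lambda>\<xi>. (i + 1) * x \<xi>) = (\<lambda>\<xi>. i * x \<xi>) + x" by (simp add: fun_eq_iff algebra_simps)
  then have "\<phi> (\<lambda>\<xi>. (i + 1) * x \<xi>) = \<phi> (\<lambda>\<xi>. i * x \<xi>) + \<phi> x"
    using additive.add[OF assms] by simp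
  with step1 show ?case by (simp add: algebra_simps)
next
  case (step2 i)
  have "(\<lambda>\<xi>. (i - 1) * x \<xi>) = (\<lambda>\<xi>. i * x \<xi>) - x" by (simp add: fun_eq_iff algebra_simps)
  then have "\<phi> (\<lambda>\<xi>. (i - 1) * x \<xi>) = \<phi> (\<lambda>\<xi>. i * x \<xi>) - \<phi> x"
    using additive.diff[OF assms] by simp
  with step2 show ?case by (simp add: algebra_simps)
qed

text \<open>For disjointly supported \<open>y\<close> the sum below has at most one term, so \<open>series y M\<close> is the
  pointwise sum of the vectors \<open>M n * y n\<close>.\<close>

definition series :: "(nat \<Rightarrow> 'a \<Rightarrow> int) \<Rightarrow> (nat \<Rightarrow> int) \<Rightarrow> 'a \<Rightarrow> int" where
  "series y M = (\<lambda>\<xi>. \<Sum>n | y n \<xi> \<noteq> 0. M n * y n \<xi>)"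

lemma series_apply:
  assumes "\<And>n. n \<noteq> k \<Longrightarrow> y n \<xi> = 0"
  shows "series y M \<xi> = M k * y k \<xi>"
proof -
  have "{n. y n \<xi> \<noteq> 0} \<subseteq> {k}" using assms by blast
  then have "{n. y n \<xi> \<noteq> 0} = {} \<or> {n. y n \<xi> \<noteq> 0} = {k}" by blast
  then show ?thesis by (auto simp: series_def)
qed

lemma disjoint_family_supp_at_most_one:
  assumes "disjoint_family (\<lambda>n. supp (y n))"
  shows "\<exists>k. \<forall>n. n \<noteq> k \<longrightarrow> y n \<xi> = 0"
proof (cases "\<exists>k. y k \<xi> \<noteq> 0")
  case True
  then obtain k where "y k \<xi> \<noteq> 0" by blast
  with assms show ?thesis by (fastforce simp: disjoint_family_on_def supp_def)
qed blast

lemma disjoint_family_if_disjoint_from_earlier: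
  fixes A :: "nat \<Rightarrow> 'a set"
  assumes "\<And>n. A n \<inter> X n = {}" and "\<And>m n. m < n \<Longrightarrow> A m \<subseteq> X n"
  shows "disjoint_family A"
  unfolding disjoint_family_on_def
proof (intro ballI impI)
  fix m n :: nat assume "m \<noteq> n"
  then have "m < n \<or> n < m" by arith
  then show "A m \<inter> A n = {}" using assms by blast
qed

lemma additive_series_congruence:
  fixes \<phi> :: "('a \<Rightarrow> int) \<Rightarrow> int"
  assumes \<phi>: "additive \<phi>" and disj: "disjoint_family (\<lambda>n. supp (y n))"
    and dvd: "\<And>m k. m \<le> k \<Longrightarrow> M m dvd M k"
  shows "M n dvd \<phi> (series y M) - (\<Sum>m<n. M m * \<phi> (y m))"
proof -
  define t where "t = series y (\<lambda>k. if n \<le> k then M k div M n else 0)"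
  have split: "series y M = (\<Sum>m<n. (\<lambda>\<xi>. M m * y m \<xi>)) + (\<lambda>\<xi>. M n * t \<xi>)"
  proof
    fix \<xi>
    obtain k where k: "\<And>m. m \<noteq> k \<Longrightarrow> y m \<xi> = 0"
      using disjoint_family_supp_at_most_one[OF disj] by blast
    have "(\<Sum>m<n. M m * y m \<xi>) = (\<Sum>m<n. if m = k then M k * y k \<xi> else 0)"
      using k by (intro sum.cong) auto
    then have head: "(\<Sum>m<n. M m * y m \<xi>) = (if k < n then M k * y k \<xi> else 0)"
      by simp
    have tail: "t \<xi> = (if n \<le> k then M k div M n else 0) * y k \<xi>"
      unfolding t_def by (rule series_apply) (rule k)
    have "M n * (M k div M n) = M k" if "n \<le> k" using dvd[OF that] by simp
    then show "series y M \<xi> = ((\<Sum>m<n. (\<lambda>\<xi>. M m * y m \<xi>)) + (\<lambda>\<xi>. M n * t \<xi>)) \<xi>"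
      using series_apply[where y = y, OF k] head tail by (auto simp: sum_fun_apply)
  qed
  have "\<phi> (series y M) = (\<Sum>m<n. M m * \<phi> (y m)) + M n * \<phi> t"
    unfolding split additive.add[OF \<phi>] additive.sum[OF \<phi>] additive_scale[OF \<phi>] ..
  then show ?thesis by simp
qed

lemma additive_series_nonzero:
  fixes \<phi> :: "('a \<Rightarrow> int) \<Rightarrow> int" and y :: "nat \<Rightarrow> 'a \<Rightarrow> int" and b :: "nat \<Rightarrow> nat"
  assumes \<phi>: "additive \<phi>" and disj: "disjoint_family (\<lambda>n. supp (y n))"
    and earlier: "\<And>m. m < n \<Longrightarrow> \<phi> (y m) = 0"
    and nonzero: "\<phi> (y n) \<noteq> 0" and bound: "\<bar>\<phi> (y n)\<bar> \<le> int (b n)"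
  shows "\<phi> (series y (\<lambda>n. \<Prod>m<n. int (b m) + 1)) \<noteq> 0"
proof -
  define M where "M n = (\<Prod>m<n. int (b m) + 1)" for n
  have "M (Suc n) dvd \<phi> (series y M) - (\<Sum>m<Suc n. M m * \<phi> (y m))"
    by (rule additive_series_congruence[OF \<phi> disj]) (simp add: M_def prod_dvd_prod_subset)
  moreover have "M (Suc n) = M n * (int (b n) + 1)" by (simp add: M_def)
  moreover have "(\<Sum>m<Suc n. M m * \<phi> (y m)) = M n * \<phi> (y n)" using earlier by simp
  moreover have "\<not> M n * (int (b n) + 1) dvd M n * \<phi> (y n)"
  proof
    assume "M n * (int (b n) + 1) dvd M n * \<phi> (y n)"
    moreover have "M n \<noteq> 0" by (simp add: M_def prod_pos)
    ultimately have "int (b n) + 1 dvd \<phi> (y n)" by simp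
    then show False using dvd_imp_le_int[OF nonzero] bound by fastforce
  qed
  ultimately have "\<phi> (series y M) \<noteq> 0" by (metis diff_0 dvd_minus_iff)
  then show ?thesis by (simp add: M_def[abs_def])
qed

section \<open>Specker's lemma\<close>

fun specker_modulus :: "(nat \<Rightarrow> int) \<Rightarrow> nat \<Rightarrow> int" where
  "specker_modulus a 0 = 1"
| "specker_modulus a (Suc n) =
     specker_modulus a n * ((\<Sum>i\<le>n. \<bar>specker_modulus a i * a i\<bar>) + int n + 1)"

lemma specker_modulus_ge_1: "1 \<le> specker_modulus a n"
proof (induction n)
  case (Suc n)
  have "1 * 1 \<le> specker_modulus a n * ((\<Sum>i\<le>n. \<bar>specker_modulus a i * a i\<bar>) + int n + 1)"
    using Suc by (intro mult_mono) (auto intro: sum_nonneg)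
  then show ?case by simp
qed simp

lemma specker_modulus_dvd: "m \<le> k \<Longrightarrow> specker_modulus a m dvd specker_modulus a k"
  by (induction k) (auto simp: le_Suc_eq intro: dvd_mult2)

lemma specker_modulus_bound: "(\<Sum>i<n. \<bar>specker_modulus a i * a i\<bar>) + int n \<le> specker_modulus a n"
proof (cases n)
  case (Suc k)
  define F where "F = (\<Sum>i\<le>k. \<bar>specker_modulus a i * a i\<bar>) + int k + 1"
  have "0 \<le> F" by (simp add: F_def sum_nonneg)
  then have "1 * F \<le> specker_modulus a k * F"
    using specker_modulus_ge_1 by (intro mult_right_mono)
  moreover have "specker_modulus a n = specker_modulus a k * F" by (simp add: Suc F_def)
  moreover have "(\<Sum>i<n. \<bar>specker_modulus a i * a i\<bar>) + int n = F"
    by (simp add: Suc F_def lessThan_Suc_atMost)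
  ultimately show ?thesis by simp
qed simp

text \<open>For \<open>N = \<phi> (series y M)\<close> and the partial sums
  \<open>s n = (\<Sum>m<n. M m * \<phi> (y m))\<close> we have \<open>N \<equiv> s n (mod M n)\<close>; as \<open>M n\<close> outgrows \<open>\<bar>s n\<bar> + n\<close>,
  eventually \<open>N = s n\<close>, and then \<open>M n * \<phi> (y n) = s (Suc n) - s n = 0\<close>.\<close>

lemma additive_finite_nonzero_on_disjoint_supports:
  fixes \<phi> :: "('a \<Rightarrow> int) \<Rightarrow> int" and y :: "nat \<Rightarrow> 'a \<Rightarrow> int"
  assumes \<phi>: "additive \<phi>" and disj: "disjoint_family (\<lambda>n. supp (y n))"
  shows "finite {n. \<phi> (y n) \<noteq> 0}"
proof -
  define a where "a n = \<phi> (y n)" for n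
  define M where "M = specker_modulus a"
  define s where "s n = (\<Sum>m<n. M m * a m)" for n
  define N where "N = \<phi> (series y M)"
  have N_eq: "N = s n" if "\<bar>N\<bar> < int n" for n
  proof (rule ccontr)
    assume "N \<noteq> s n"
    have "M n dvd N - s n"
      unfolding N_def s_def a_def M_def
      using additive_series_congruence[OF \<phi> disj specker_modulus_dvd] .
    then have "\<bar>M n\<bar> \<le> \<bar>N - s n\<bar>" using \<open>N \<noteq> s n\<close> dvd_imp_le_int by simp
    moreover have "\<bar>s n\<bar> \<le> (\<Sum>m<n. \<bar>M m * a m\<bar>)" unfolding s_def by (rule sum_abs)
    moreover have "(\<Sum>m<n. \<bar>M m * a m\<bar>) + int n \<le> M n"
      unfolding M_def by (rule specker_modulus_bound)
    ultimately show False using that by linarith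
  qed
  have "a n = 0" if "\<bar>N\<bar> < int n" for n
  proof -
    have "M n * a n = s (Suc n) - s n" by (simp add: s_def)
    also have "\<dots> = 0" using N_eq[of n] N_eq[of "Suc n"] that by simp
    finally show ?thesis using specker_modulus_ge_1[of a n] by (simp add: M_def)
  qed
  then have "{n. \<phi> (y n) \<noteq> 0} \<subseteq> {..nat \<bar>N\<bar>}" by (force simp: a_def)
  then show ?thesis using finite_subset by blast
qed

lemma additive_finite_unit_support:
  fixes \<phi> :: "('a \<Rightarrow> int) \<Rightarrow> int"
  assumes \<phi>: "additive \<phi>"
  shows "finite {j. \<phi> (unit_vec j) \<noteq> 0}"
proof (rule ccontr)
  assume "infinite {j. \<phi> (unit_vec j) \<noteq> 0}"
  then obtain s :: "nat \<Rightarrow> 'a" where s: "inj s" "range s \<subseteq> {j. \<phi> (unit_vec j) \<noteq> 0}"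
    using infinite_countable_subset by blast
  have "disjoint_family (\<lambda>n. supp (unit_vec (s n)))"
    using s(1) by (auto simp: disjoint_family_on_def supp_def unit_vec_def inj_def)
  then have "finite {n. \<phi> (unit_vec (s n)) \<noteq> 0}"
    by (rule additive_finite_nonzero_on_disjoint_supports[OF \<phi>])
  moreover have "{n. \<phi> (unit_vec (s n)) \<noteq> 0} = UNIV" using s(2) by auto
  ultimately show False by simp
qed

lemma zero_if_all_powers_dvd:
  fixes p w :: int
  assumes "2 \<le> p" and "\<And>n. p ^ n dvd w"
  shows "w = 0"
proof (rule ccontr)
  assume "w \<noteq> 0"
  define n where "n = nat \<bar>w\<bar>"
  have "int n < 2 ^ n" by (metis less_exp of_nat_less_iff of_nat_numeral of_nat_power)
  also have "\<dots> \<le> p ^ n" using assms(1) by (simp add: power_mono)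
  also have "\<dots> \<le> \<bar>w\<bar>"
    using dvd_imp_le_int[OF \<open>w \<noteq> 0\<close> assms(2)] abs_ge_self order_trans by blast
  finally show False by (simp add: n_def)
qed

lemma additive_vanishes_on_weighted_powers:
  fixes \<psi> :: "('a \<Rightarrow> int) \<Rightarrow> int" and p :: int
  assumes \<psi>: "additive \<psi>" and unit: "\<And>j. \<psi> (unit_vec j) = 0"
    and p: "2 \<le> p" and t: "inj_on t A"
  shows "\<psi> (\<lambda>\<xi>. if \<xi> \<in> A then p ^ t \<xi> * g \<xi> else 0) = 0"
proof -
  define y where "y m = (\<lambda>\<xi>. if \<xi> \<in> A \<and> t \<xi> = m then g \<xi> else 0)" for m
  have disj: "disjoint_family (\<lambda>m. supp (y m))"
    by (auto simp: disjoint_family_on_def supp_def y_def)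
  have "series y (\<lambda>m. p ^ m) = (\<lambda>\<xi>. if \<xi> \<in> A then p ^ t \<xi> * g \<xi> else 0)"
  proof
    fix \<xi>
    have "series y (\<lambda>m. p ^ m) \<xi> = p ^ t \<xi> * y (t \<xi>) \<xi>"
      by (rule series_apply) (auto simp: y_def)
    then show "series y (\<lambda>m. p ^ m) \<xi> = (if \<xi> \<in> A then p ^ t \<xi> * g \<xi> else 0)"
      by (simp add: y_def)
  qed
  moreover have "\<psi> (y m) = 0" for m
  proof (cases "\<exists>\<xi>\<in>A. t \<xi> = m")
    case True
    then obtain \<xi>\<^sub>0 where "\<xi>\<^sub>0 \<in> A" "t \<xi>\<^sub>0 = m" by blast
    then have "y m = (\<lambda>\<xi>. g \<xi>\<^sub>0 * unit_vec \<xi>\<^sub>0 \<xi>)"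
      using t by (auto simp: y_def unit_vec_def inj_on_def fun_eq_iff)
    then show ?thesis using additive_scale[OF \<psi>] unit by simp
  next
    case False
    then have "y m = 0" by (auto simp: y_def fun_eq_iff)
    then show ?thesis using additive.zero[OF \<psi>] by simp
  qed
  ultimately have "p ^ n dvd \<psi> (\<lambda>\<xi>. if \<xi> \<in> A then p ^ t \<xi> * g \<xi> else 0)" for n
    using additive_series_congruence[OF \<psi> disj, of "\<lambda>m. p ^ m" n] by (simp add: le_imp_power_dvd)
  then show ?thesis using p zero_if_all_powers_dvd by blast
qed

text \<open>Every integer is a combination of \<open>2\<^sup>n\<close> and \<open>3\<^sup>n\<close>, so every vector with countable
  support is a sum of two vectors to which the previous lemma applies.\<close>

lemma additive_vanishes_on_countable_support:
  fixes \<psi> :: "('a \<Rightarrow> int) \<Rightarrow> int"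
  assumes \<psi>: "additive \<psi>" and unit: "\<And>j. \<psi> (unit_vec j) = 0" and c: "countable (supp c)"
  shows "\<psi> c = 0"
proof -
  define t where "t = to_nat_on (supp c)"
  have t: "inj_on t (supp c)" unfolding t_def using c by (rule inj_on_to_nat_on)
  have "\<exists>u v. 2 ^ n * u + 3 ^ n * v = (z :: int)" for n z
  proof -
    have "coprime ((2::int) ^ n) (3 ^ n)" by simp
    then obtain u v where "u * 2 ^ n + v * 3 ^ n = (1::int)"
      using bezout_int[of "2 ^ n" "3 ^ n"] by (auto simp: coprime_iff_gcd_eq_1)
    then have "2 ^ n * (u * z) + 3 ^ n * (v * z) = z" by (metis distrib_right mult.assoc mult.commute mult_1)
    then show ?thesis by blast
  qed
  then have "\<forall>\<xi>. \<exists>w. 2 ^ t \<xi> * fst w + 3 ^ t \<xi> * snd w = c \<xi>" by simp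
  from choice[OF this] obtain w
    where w: "\<And>\<xi>. 2 ^ t \<xi> * fst (w \<xi>) + 3 ^ t \<xi> * snd (w \<xi>) = c \<xi>" by blast
  define U where "U = (\<lambda>\<xi>. if \<xi> \<in> supp c then 2 ^ t \<xi> * fst (w \<xi>) else 0)"
  define V where "V = (\<lambda>\<xi>. if \<xi> \<in> supp c then 3 ^ t \<xi> * snd (w \<xi>) else 0)"
  have "c = U + V" using w by (auto simp: fun_eq_iff supp_def U_def V_def)
  then have "\<psi> c = \<psi> U + \<psi> V" by (simp add: additive.add[OF \<psi>])
  also have "\<dots> = 0"
    unfolding U_def V_def using additive_vanishes_on_weighted_powers[OF \<psi> unit _ t] by simp
  finally show ?thesis .
qed

section \<open>Residuals and their pieces\<close>

definition coordinate_part :: "(('a \<Rightarrow> int) \<Rightarrow> int) \<Rightarrow> ('a \<Rightarrow> int) \<Rightarrow> int" where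
  "coordinate_part \<phi> x = (\<Sum>j | \<phi> (unit_vec j) \<noteq> 0. \<phi> (unit_vec j) * x j)"

definition residual :: "(('a \<Rightarrow> int) \<Rightarrow> int) \<Rightarrow> ('a \<Rightarrow> int) \<Rightarrow> int" where
  "residual \<phi> x = \<phi> x - coordinate_part \<phi> x"

lemma additive_residual:
  assumes "additive \<phi>"
  shows "additive (residual \<phi>)"
  using additive_finite_unit_support[OF assms]
  by unfold_locales
    (simp add: residual_def coordinate_part_def additive.add[OF assms] sum.distrib algebra_simps)

lemma residual_unit_vec:
  assumes "additive \<phi>"
  shows "residual \<phi> (unit_vec j) = 0"
proof -
  have "coordinate_part \<phi> (unit_vec j) = (\<Sum>j' | \<phi> (unit_vec j') \<noteq> 0. if j' = j then \<phi> (unit_vec j) else 0)"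
    unfolding coordinate_part_def by (intro sum.cong) (auto simp: unit_vec_def)
  also have "\<dots> = \<phi> (unit_vec j)" using additive_finite_unit_support[OF assms] by simp
  finally show ?thesis by (simp add: residual_def)
qed

definition nonvanishing_on :: "(('a \<Rightarrow> int) \<Rightarrow> int) \<Rightarrow> 'a set \<Rightarrow> bool" where
  "nonvanishing_on \<psi> A \<longleftrightarrow> (\<exists>c. supp c \<subseteq> A \<and> \<psi> c \<noteq> 0)"

definition nonvanishing_pieces :: "(('a \<Rightarrow> int) \<Rightarrow> int) \<Rightarrow> 'a set \<Rightarrow> nat \<Rightarrow> bool" where
  "nonvanishing_pieces \<psi> S n \<longleftrightarrow>
     (\<exists>F. finite F \<and> n \<le> card F \<and> pairwise disjnt F \<and> (\<forall>A\<in>F. A \<subseteq> S \<and> nonvanishing_on \<psi> A))"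

lemma nonvanishing_on_nonempty:
  assumes "additive \<psi>" and "nonvanishing_on \<psi> A"
  shows "A \<noteq> {}"
proof
  assume "A = {}"
  with assms(2) obtain c where "supp c = {}" "\<psi> c \<noteq> 0" by (auto simp: nonvanishing_on_def)
  then have "c = 0" by (auto simp: supp_def fun_eq_iff)
  with \<open>\<psi> c \<noteq> 0\<close> show False by (simp add: additive.zero[OF assms(1)])
qed

lemma nonvanishing_on_split:
  assumes "additive \<psi>" and "nonvanishing_on \<psi> A"
  shows "nonvanishing_on \<psi> (A \<inter> T) \<or> nonvanishing_on \<psi> (A - T)"
proof -
  obtain c where c: "supp c \<subseteq> A" "\<psi> c \<noteq> 0" using assms(2) by (auto simp: nonvanishing_on_def)
  define c\<^sub>1 where "c\<^sub>1 = (\<lambda>\<xi>. if \<xi> \<in> T then c \<xi> else 0)"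
  define c\<^sub>2 where "c\<^sub>2 = (\<lambda>\<xi>. if \<xi> \<in> T then 0 else c \<xi>)"
  have "c = c\<^sub>1 + c\<^sub>2" by (auto simp: c\<^sub>1_def c\<^sub>2_def fun_eq_iff)
  then have "\<psi> c\<^sub>1 \<noteq> 0 \<or> \<psi> c\<^sub>2 \<noteq> 0" using c(2) by (auto simp: additive.add[OF assms(1)])
  moreover have "supp c\<^sub>1 \<subseteq> A \<inter> T" "supp c\<^sub>2 \<subseteq> A - T"
    using c(1) by (auto simp: supp_def c\<^sub>1_def c\<^sub>2_def)
  ultimately show ?thesis unfolding nonvanishing_on_def by blast
qed

lemma nonvanishing_pieces_mono:
  "m \<le> n \<Longrightarrow> S \<subseteq> S' \<Longrightarrow> nonvanishing_pieces \<psi> S n \<Longrightarrow> nonvanishing_pieces \<psi> S' m"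
  unfolding nonvanishing_pieces_def by (meson order_trans)

lemma nonvanishing_pieces_image:
  assumes \<psi>: "additive \<psi>" and F: "finite F" "pairwise disjnt F"
    and g: "\<And>A. A \<in> F \<Longrightarrow> g A \<subseteq> A \<inter> S \<and> nonvanishing_on \<psi> (g A)"
  shows "nonvanishing_pieces \<psi> S (card F)"
proof -
  have "inj_on g F"
  proof (rule inj_onI)
    fix A B assume AB: "A \<in> F" "B \<in> F" "g A = g B"
    have "g A \<noteq> {}" using nonvanishing_on_nonempty[OF \<psi>] g[OF AB(1)] by blast
    moreover have "A \<noteq> B \<Longrightarrow> A \<inter> B = {}" using F(2) AB by (auto simp: pairwise_def disjnt_def)
    ultimately show "A = B" using g[OF AB(1)] g[OF AB(2)] AB(3) by blast
  qed
  moreover have "pairwise disjnt (g ` F)"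
    using F(2) g by (intro disjoint_image_subset) auto
  ultimately show ?thesis
    unfolding nonvanishing_pieces_def using F(1) g by (intro exI[of _ "g ` F"]) (auto simp: card_image)
qed

lemma nonvanishing_pieces_split:
  assumes \<psi>: "additive \<psi>" and "nonvanishing_pieces \<psi> S (2 * m)"
  shows "nonvanishing_pieces \<psi> (S \<inter> T) m \<or> nonvanishing_pieces \<psi> (S - T) m"
proof -
  obtain F where F: "finite F" "2 * m \<le> card F" "pairwise disjnt F"
    and pieces: "\<And>A. A \<in> F \<Longrightarrow> A \<subseteq> S \<and> nonvanishing_on \<psi> A"
    using assms(2) unfolding nonvanishing_pieces_def by blast
  define F\<^sub>1 where "F\<^sub>1 = {A\<in>F. nonvanishing_on \<psi> (A \<inter> T)}"
  define F\<^sub>2 where "F\<^sub>2 = {A\<in>F. nonvanishing_on \<psi> (A - T)}"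
  have "F = F\<^sub>1 \<union> F\<^sub>2" using pieces nonvanishing_on_split[OF \<psi>] by (auto simp: F\<^sub>1_def F\<^sub>2_def)
  then have "card F \<le> card F\<^sub>1 + card F\<^sub>2" by (metis card_Un_le)
  then have "m \<le> card F\<^sub>1 \<or> m \<le> card F\<^sub>2" using F(2) by linarith
  moreover have "nonvanishing_pieces \<psi> (S \<inter> T) (card F\<^sub>1)"
    using F pieces by (intro nonvanishing_pieces_image[OF \<psi>, where g = "\<lambda>A. A \<inter> T"]) (auto simp: F\<^sub>1_def pairwise_def)
  moreover have "nonvanishing_pieces \<psi> (S - T) (card F\<^sub>2)"
    using F pieces by (intro nonvanishing_pieces_image[OF \<psi>, where g = "\<lambda>A. A - T"]) (auto simp: F\<^sub>2_def pairwise_def)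
  ultimately show ?thesis using nonvanishing_pieces_mono by blast
qed

lemma nonvanishing_pieces_insert:
  assumes \<psi>: "additive \<psi>" and "nonvanishing_pieces \<psi> S' k" and "S' \<subseteq> S"
    and "P \<subseteq> S - S'" and "nonvanishing_on \<psi> P"
  shows "nonvanishing_pieces \<psi> S (Suc k)"
proof -
  obtain F where F: "finite F" "k \<le> card F" "pairwise disjnt F" "\<forall>A\<in>F. A \<subseteq> S' \<and> nonvanishing_on \<psi> A"
    using assms(2) unfolding nonvanishing_pieces_def by blast
  have "P \<notin> F" using F(4) assms(4) nonvanishing_on_nonempty[OF \<psi> assms(5)] by blast
  moreover have "pairwise disjnt (insert P F)"
    using F(3,4) assms(4) by (auto simp: pairwise_insert disjnt_def)
  ultimately show ?thesis
    unfolding nonvanishing_pieces_def using F assms(3-5)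
    by (intro exI[of _ "insert P F"]) auto
qed

lemma nonvanishing_pieces_extract:
  assumes \<psi>: "additive \<psi>" and all: "\<And>n. nonvanishing_pieces \<psi> S n"
  shows "\<exists>P\<subseteq>S. nonvanishing_on \<psi> P \<and> (\<forall>n. nonvanishing_pieces \<psi> (S - P) n)"
proof -
  obtain F where F: "finite F" "2 \<le> card F" "pairwise disjnt F" "\<forall>A\<in>F. A \<subseteq> S \<and> nonvanishing_on \<psi> A"
    using all[of 2] unfolding nonvanishing_pieces_def by blast
  then obtain B\<^sub>1 B\<^sub>2 where B: "B\<^sub>1 \<in> F" "B\<^sub>2 \<in> F" "B\<^sub>1 \<noteq> B\<^sub>2"
    by (metis card_le_Suc_iff numeral_2_eq_2 insertCI)
  show ?thesis
  proof (cases "\<forall>n. nonvanishing_pieces \<psi> (S - B\<^sub>1) n")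
    case True
    then show ?thesis using F(4) B(1) by blast
  next
    case False
    then obtain n\<^sub>0 where n\<^sub>0: "\<not> nonvanishing_pieces \<psi> (S - B\<^sub>1) n\<^sub>0" by blast
    have "nonvanishing_pieces \<psi> (S - B\<^sub>2) n" for n
    proof -
      have "nonvanishing_pieces \<psi> (S \<inter> B\<^sub>1) (n + n\<^sub>0) \<or> nonvanishing_pieces \<psi> (S - B\<^sub>1) (n + n\<^sub>0)"
        using nonvanishing_pieces_split[OF \<psi> all] .
      then have "nonvanishing_pieces \<psi> (S \<inter> B\<^sub>1) (n + n\<^sub>0)"
        using n\<^sub>0 nonvanishing_pieces_mono[of n\<^sub>0 "n + n\<^sub>0"] by auto
      moreover have "S \<inter> B\<^sub>1 \<subseteq> S - B\<^sub>2" using F(3) B by (auto simp: pairwise_def disjnt_def)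
      ultimately show ?thesis
        using nonvanishing_pieces_mono[of n "n + n\<^sub>0" "S \<inter> B\<^sub>1" "S - B\<^sub>2"] by simp
    qed
    then show ?thesis using F(4) B(2) by blast
  qed
qed

text \<open>Were there arbitrarily many pieces, they could be split off one after another forever;
  vectors supported on them would form a disjointly supported sequence on which \<open>\<psi>\<close> never
  vanishes.\<close>

lemma additive_finite_pieces:
  assumes \<psi>: "additive \<psi>"
  shows "\<exists>n. \<not> nonvanishing_pieces \<psi> UNIV n"
proof (rule ccontr)
  assume "\<nexists>n. \<not> nonvanishing_pieces \<psi> UNIV n"
  then have all\<^sub>0: "\<And>n. nonvanishing_pieces \<psi> UNIV n" by blast
  define step where
    "step S = (SOME P. P \<subseteq> S \<and> nonvanishing_on \<psi> P \<and> (\<forall>n. nonvanishing_pieces \<psi> (S - P) n))"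
    for S :: "'a set"
  have step: "step S \<subseteq> S \<and> nonvanishing_on \<psi> (step S) \<and> (\<forall>n. nonvanishing_pieces \<psi> (S - step S) n)"
    if "\<And>n. nonvanishing_pieces \<psi> S n" for S
    unfolding step_def using nonvanishing_pieces_extract[OF \<psi> that] by (rule someI_ex)
  define S where "S = rec_nat UNIV (\<lambda>_ S. S - step S)"
  have S_Suc: "S (Suc k) = S k - step (S k)" for k by (simp add: S_def)
  have all: "nonvanishing_pieces \<psi> (S k) n" for k n
  proof (induction k arbitrary: n)
    case 0 then show ?case using all\<^sub>0 by (simp add: S_def)
  next
    case (Suc k) then show ?case using step[of "S k"] by (simp add: S_Suc)
  qed
  have S_later: "S n \<subseteq> S m - step (S m)" if "m < n" for m n
    using that by (induction n) (auto simp: S_Suc less_Suc_eq)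
  have "\<exists>c. supp c \<subseteq> step (S k) \<and> \<psi> c \<noteq> 0" for k
    using step[OF all] by (simp add: nonvanishing_on_def)
  then obtain y where y: "\<And>k. supp (y k) \<subseteq> step (S k)" "\<And>k. \<psi> (y k) \<noteq> 0" by metis
  have "disjoint_family (\<lambda>k. supp (y k))"
    by (rule disjoint_family_if_disjoint_from_earlier[where X = "\<lambda>k. - S k"])
      (use y(1) step[OF all] S_later in blast)+
  then have "finite {k. \<psi> (y k) \<noteq> 0}" by (rule additive_finite_nonzero_on_disjoint_supports[OF \<psi>])
  then show False using y(2) by simp
qed

lemma card_of_ordLess_if_finite: "finite A \<Longrightarrow> infinite B \<Longrightarrow> |A| <o |B|"
  using finite_ordLess_infinite[OF card_of_Well_order card_of_Well_order] by (simp add: Field_card_of)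

lemma not_card_of_ordLess_iff: "\<not> |A| <o |B| \<longleftrightarrow> |B| \<le>o |A|"
  by (rule not_ordLess_iff_ordLeq[OF card_of_Well_order card_of_Well_order])

lemma not_card_of_ordLeq_iff: "\<not> |A| \<le>o |B| \<longleftrightarrow> |B| <o |A|"
  by (rule not_ordLeq_iff_ordLess[OF card_of_Well_order card_of_Well_order])

lemma card_of_UN_nat_ordLeq:
  assumes "infinite S" and "\<And>n :: nat. |A n| \<le>o |S|"
  shows "|\<Union>n. A n| \<le>o |S|"
  using card_of_UNION_ordLeq_infinite[OF assms(1), of UNIV A] assms
    infinite_iff_card_of_nat by blast

lemma card_of_UN_finite_ordLess:
  assumes W: "|W| <o |Q|" and Q: "infinite Q" and F: "\<And>i. i \<in> W \<Longrightarrow> finite (F i)"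
  shows "|\<Union>i\<in>W. F i| <o |Q|"
proof (cases "finite W")
  case True
  then show ?thesis using F Q by (intro card_of_ordLess_if_finite) auto
next
  case False
  have "|F i| \<le>o |W|" if "i \<in> W" for i
    using card_of_ordLess_if_finite[OF F[OF that] False] by (rule ordLess_imp_ordLeq)
  then have "|\<Union>i\<in>W. F i| \<le>o |W|"
    using card_of_UNION_ordLeq_infinite[OF False card_of_mono1[OF subset_refl]] by blast
  then show ?thesis using W by (rule ordLeq_ordLess_trans)
qed

lemma countable_iff_card_of_ordLeq_nat: "countable A \<longleftrightarrow> |A| \<le>o |UNIV :: nat set|"
  unfolding countable_def card_of_ordLeq[symmetric] by auto

lemma card_of_ordLess_if_countable: "countable A \<Longrightarrow> \<not> countable B \<Longrightarrow> |A| <o |B|"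
  unfolding countable_iff_card_of_ordLeq_nat not_card_of_ordLeq_iff[symmetric]
  using ordLeq_transitive by blast

lemma card_of_Un_ordLeq_infinite: "infinite S \<Longrightarrow> |A| \<le>o |S| \<Longrightarrow> |B| \<le>o |S| \<Longrightarrow> |A \<union> B| \<le>o |S|"
  using card_of_Un_ordLeq_infinite_Field[of "|S|"] by (simp add: Field_card_of card_of_card_order_on)

lemma card_of_ordLess_UN_nat:
  assumes "infinite S" and "|S| <o |\<Union>n :: nat. A n|"
  shows "\<exists>n. |S| <o |A n|"
proof (rule ccontr)
  assume "\<nexists>n. |S| <o |A n|"
  then have "|\<Union>n. A n| \<le>o |S|"
    using not_card_of_ordLess_iff by (intro card_of_UN_nat_ordLeq[OF assms(1)]) blast
  with assms(2) show False using not_ordLess_ordLeq by blast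
qed

lemma card_of_ordLess_Diff:
  assumes S: "infinite S" and "|S| <o |A|" and "|X| \<le>o |S|"
  shows "|S| <o |A - X|"
proof -
  have "\<not> |A - X| \<le>o |S|"
  proof
    assume "|A - X| \<le>o |S|"
    then have "|(A - X) \<union> X| \<le>o |S|" using assms(3) by (rule card_of_Un_ordLeq_infinite[OF S])
    moreover have "|A| \<le>o |(A - X) \<union> X|" by (rule card_of_mono1) blast
    ultimately have "|A| \<le>o |S|" using ordLeq_transitive by blast
    with assms(2) show False using not_ordLess_ordLeq by blast
  qed
  then show ?thesis by (simp add: not_card_of_ordLeq_iff)
qed

lemma uncountable_small_infinite_superset:
  assumes uncountable: "\<not> countable (UNIV :: 'a set)" and X: "|X| <o |UNIV :: 'a set|"
  obtains S :: "'a set" where "X \<subseteq> S" and "infinite S" and "|S| <o |UNIV :: 'a set|"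
proof -
  have inf: "infinite (UNIV :: 'a set)" using uncountable countable_finite by blast
  obtain f :: "nat \<Rightarrow> 'a" where "inj f" using infinite_countable_subset[OF inf] by blast
  have "countable (range f)" by (rule countable_image) simp
  then have "|range f| <o |UNIV :: 'a set|" using uncountable by (rule card_of_ordLess_if_countable)
  then have "|X \<union> range f| <o |UNIV :: 'a set|" by (rule card_of_Un_ordLess_infinite[OF inf X])
  moreover have "infinite (X \<union> range f)" using \<open>inj f\<close> finite_imageD infinite_UNIV_nat by auto
  ultimately show thesis using that[of "X \<union> range f"] by blast
qed

lemma infinite_partition_equipotent:
  assumes "infinite J"
  obtains Q where "\<And>\<alpha>. \<alpha> \<in> J \<Longrightarrow> Q \<alpha> \<subseteq> J" and "\<And>\<alpha>. \<alpha> \<in> J \<Longrightarrow> |Q \<alpha>| =o |J|"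
    and "\<And>\<alpha> \<beta>. \<alpha> \<in> J \<Longrightarrow> \<beta> \<in> J \<Longrightarrow> \<alpha> \<noteq> \<beta> \<Longrightarrow> Q \<alpha> \<inter> Q \<beta> = {}"
proof -
  obtain g where g: "bij_betw g (J \<times> J) J"
    using card_of_Times_same_infinite[OF assms] card_of_ordIso by blast
  define Q where "Q \<alpha> = (\<lambda>j. g (\<alpha>, j)) ` J" for \<alpha>
  show thesis
  proof
    show "Q \<alpha> \<subseteq> J" if "\<alpha> \<in> J" for \<alpha>
      using g that by (auto simp: Q_def bij_betw_def)
    show "|Q \<alpha>| =o |J|" if "\<alpha> \<in> J" for \<alpha>
    proof -
      have "bij_betw (\<lambda>j. g (\<alpha>, j)) J (Q \<alpha>)"
        using g that by (auto simp: Q_def bij_betw_def inj_on_def)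
      then show ?thesis using card_of_ordIsoI ordIso_symmetric by blast
    qed
    show "Q \<alpha> \<inter> Q \<beta> = {}" if "\<alpha> \<in> J" "\<beta> \<in> J" "\<alpha> \<noteq> \<beta>" for \<alpha> \<beta>
      using g that by (auto simp: Q_def bij_betw_def inj_on_def)
  qed
qed

section \<open>Row-finite matrices\<close>

definition graph_fun :: "('a \<times> int) set \<Rightarrow> 'a \<Rightarrow> int" where
  "graph_fun G j = (if j \<in> Domain G then THE v. (j, v) \<in> G else 0)"

lemma graph_fun_eq: "single_valued G \<Longrightarrow> (j, v) \<in> G \<Longrightarrow> graph_fun G j = v"
  unfolding graph_fun_def by (auto dest: single_valuedD)

lemma graph_fun_outside: "j \<notin> Domain G \<Longrightarrow> graph_fun G j = 0"
  by (simp add: graph_fun_def)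

lemma single_valued_Union_chain:
  assumes "chain\<^sub>\<subseteq> C" and "\<And>G. G \<in> C \<Longrightarrow> single_valued G"
  shows "single_valued (\<Union>C)"
proof (rule single_valuedI)
  fix x y z assume "(x, y) \<in> \<Union>C" "(x, z) \<in> \<Union>C"
  then obtain G H where "G \<in> C" "H \<in> C" "(x, y) \<in> G" "(x, z) \<in> H" by blast
  with assms show "y = z" unfolding chain_subset_def by (metis single_valuedD subsetD)
qed

lemma graph_fun_extend:
  assumes M: "single_valued M" and i\<^sub>0: "i\<^sub>0 \<notin> Domain M"
  obtains G where "single_valued G" and "M \<subseteq> G" and "Domain G = Domain M \<union> insert i\<^sub>0 D"
    and "graph_fun G i\<^sub>0 = v" and "\<And>j. j \<noteq> i\<^sub>0 \<Longrightarrow> graph_fun G j = graph_fun M j"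
proof -
  define G where "G = M \<union> {(i\<^sub>0, v)} \<union> (\<lambda>j. (j, 0)) ` (D - Domain M - {i\<^sub>0})"
  have sv: "single_valued G"
    using M i\<^sub>0 by (auto simp: G_def single_valued_def Domain.simps)
  have val: "graph_fun G j = graph_fun M j" if j: "j \<noteq> i\<^sub>0" for j
  proof (cases "j \<in> Domain G")
    case True
    then consider w where "(j, w) \<in> M" | "j \<notin> Domain M" "(j, 0) \<in> G"
      using j by (auto simp: G_def)
    then show ?thesis
    proof cases
      case (1 w)
      then have "(j, w) \<in> G" by (simp add: G_def)
      then show ?thesis using graph_fun_eq[OF sv] graph_fun_eq[OF M 1] by metis
    next
      case 2
      then show ?thesis using graph_fun_eq[OF sv] graph_fun_outside by metis
    qed
  next
    case False
    moreover have "Domain M \<subseteq> Domain G" by (auto simp: G_def)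
    ultimately have "j \<notin> Domain M" by blast
    with False show ?thesis by (simp add: graph_fun_outside)
  qed
  have "graph_fun G i\<^sub>0 = v" by (rule graph_fun_eq[OF sv]) (simp add: G_def)
  moreover have "M \<subseteq> G" and "Domain G = Domain M \<union> insert i\<^sub>0 D" by (auto simp: G_def)
  ultimately show thesis using that[OF sv] val by blast
qed

locale row_finite_matrix =
  fixes b :: "'a \<Rightarrow> 'a \<Rightarrow> int" and Q :: "'a set"
  assumes row_finite: "finite {j. b i j \<noteq> 0}"
    and diagonal: "i \<in> Q \<Longrightarrow> b i i \<noteq> 0"
    and infinite_Q: "infinite Q"
begin

definition row_value :: "'a \<Rightarrow> ('a \<Rightarrow> int) \<Rightarrow> int" where
  "row_value i c = (\<Sum>j | b i j \<noteq> 0. b i j * c j)"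

text \<open>Partial vectors are encoded as single-valued graphs, so that Zorn's lemma for \<open>\<subseteq>\<close> applies.\<close>

definition solved_rows :: "('a \<times> int) set \<Rightarrow> 'a set" where
  "solved_rows G = {i\<in>Q. {j. b i j \<noteq> 0} \<inter> Q \<subseteq> Domain G \<and> row_value i (graph_fun G) \<noteq> 0}"

definition admissible :: "('a \<times> int) set \<Rightarrow> bool" where
  "admissible G \<longleftrightarrow> single_valued G \<and> Domain G \<subseteq> Q \<and> Domain G \<subseteq> (\<Union>i\<in>solved_rows G. {j. b i j \<noteq> 0})"

lemma row_value_cong: "(\<And>j. b i j \<noteq> 0 \<Longrightarrow> c j = c' j) \<Longrightarrow> row_value i c = row_value i c'"
  unfolding row_value_def by (intro sum.cong) auto

lemma solved_rows_mono:
  assumes "G \<subseteq> G'" and "single_valued G'" and "Domain G' \<subseteq> Q"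
  shows "solved_rows G \<subseteq> solved_rows G'"
proof
  fix i assume i: "i \<in> solved_rows G"
  have "graph_fun G' j = graph_fun G j" if "b i j \<noteq> 0" for j
  proof (cases "j \<in> Q")
    case True
    then have "j \<in> Domain G" using i that by (auto simp: solved_rows_def)
    then obtain v where "(j, v) \<in> G" by auto
    then show ?thesis
      using assms single_valued_subset by (metis graph_fun_eq subsetD)
  next
    case False
    then show ?thesis using assms(3) Domain_mono[OF assms(1)] by (metis graph_fun_outside subsetD)
  qed
  moreover have "{j. b i j \<noteq> 0} \<inter> Q \<subseteq> Domain G'"
    using i Domain_mono[OF assms(1)] by (auto simp: solved_rows_def)
  ultimately show "i \<in> solved_rows G'"
    using i row_value_cong[of i "graph_fun G'" "graph_fun G"] by (auto simp: solved_rows_def)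
qed

lemma admissible_Union_chain:
  assumes "C \<in> chains {G. admissible G}"
  shows "admissible (\<Union>C)"
proof -
  have C: "chain\<^sub>\<subseteq> C" "\<And>G. G \<in> C \<Longrightarrow> admissible G" using assms by (auto simp: chains_def)
  have sv: "single_valued (\<Union>C)" using C by (intro single_valued_Union_chain) (auto simp: admissible_def)
  have dom: "Domain (\<Union>C) \<subseteq> Q" using C(2) by (auto simp: admissible_def)
  have "Domain G \<subseteq> (\<Union>i\<in>solved_rows (\<Union>C). {j. b i j \<noteq> 0})" if "G \<in> C" for G
  proof -
    have "Domain G \<subseteq> (\<Union>i\<in>solved_rows G. {j. b i j \<noteq> 0})"
      using C(2)[OF that] by (simp add: admissible_def)
    also have "solved_rows G \<subseteq> solved_rows (\<Union>C)"
      using that sv dom by (intro solved_rows_mono) auto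
    then have "(\<Union>i\<in>solved_rows G. {j. b i j \<noteq> 0}) \<subseteq> (\<Union>i\<in>solved_rows (\<Union>C). {j. b i j \<noteq> 0})"
      by (rule UN_mono) simp
    finally show ?thesis .
  qed
  then have "Domain (\<Union>C) \<subseteq> (\<Union>i\<in>solved_rows (\<Union>C). {j. b i j \<noteq> 0})"
    unfolding Domain_Union by (rule UN_least)
  with sv dom show ?thesis by (simp add: admissible_def)
qed

text \<open>A new row \<open>i\<^sub>0\<close> outside the domain is solved by setting its diagonal entry to \<open>0\<close> or \<open>1\<close>
  and its other undetermined entries to \<open>0\<close>.\<close>

lemma admissible_extend:
  assumes M: "admissible M" and i\<^sub>0: "i\<^sub>0 \<in> Q" "i\<^sub>0 \<notin> Domain M"
  shows "\<exists>G. admissible G \<and> M \<subseteq> G \<and> G \<noteq> M"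
proof -
  define r where "r = (\<Sum>j \<in> {j. b i\<^sub>0 j \<noteq> 0} - {i\<^sub>0}. b i\<^sub>0 j * graph_fun M j)"
  define v\<^sub>0 :: int where "v\<^sub>0 = of_bool (r = 0)"
  have svM: "single_valued M" and domM: "Domain M \<subseteq> Q" using M by (auto simp: admissible_def)
  obtain G where sv: "single_valued G" and "M \<subseteq> G"
    and dom: "Domain G = Domain M \<union> insert i\<^sub>0 ({j. b i\<^sub>0 j \<noteq> 0} \<inter> Q)"
    and val_i\<^sub>0: "graph_fun G i\<^sub>0 = v\<^sub>0" and val: "\<And>j. j \<noteq> i\<^sub>0 \<Longrightarrow> graph_fun G j = graph_fun M j"
    using graph_fun_extend[OF svM i\<^sub>0(2)] by metis
  have "row_value i\<^sub>0 (graph_fun G)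
      = b i\<^sub>0 i\<^sub>0 * graph_fun G i\<^sub>0 + (\<Sum>j \<in> {j. b i\<^sub>0 j \<noteq> 0} - {i\<^sub>0}. b i\<^sub>0 j * graph_fun G j)"
    unfolding row_value_def using sum.remove[OF row_finite, of i\<^sub>0] diagonal[OF i\<^sub>0(1)] by simp
  also have "(\<Sum>j \<in> {j. b i\<^sub>0 j \<noteq> 0} - {i\<^sub>0}. b i\<^sub>0 j * graph_fun G j) = r"
    unfolding r_def using val by (intro sum.cong) auto
  finally have "row_value i\<^sub>0 (graph_fun G) = b i\<^sub>0 i\<^sub>0 * v\<^sub>0 + r" using val_i\<^sub>0 by simp
  then have solved: "i\<^sub>0 \<in> solved_rows G"
    using diagonal[OF i\<^sub>0(1)] i\<^sub>0(1) dom by (auto simp: solved_rows_def v\<^sub>0_def)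
  have domG: "Domain G \<subseteq> Q" using dom domM i\<^sub>0(1) by blast
  have "solved_rows M \<subseteq> solved_rows G" using \<open>M \<subseteq> G\<close> sv domG by (rule solved_rows_mono)
  have "Domain M \<subseteq> (\<Union>i\<in>solved_rows M. {j. b i j \<noteq> 0})" using M by (simp add: admissible_def)
  also have "\<dots> \<subseteq> (\<Union>i\<in>solved_rows G. {j. b i j \<noteq> 0})"
    using \<open>solved_rows M \<subseteq> solved_rows G\<close> by blast
  finally have "Domain G \<subseteq> (\<Union>i\<in>solved_rows G. {j. b i j \<noteq> 0})"
    unfolding dom using solved diagonal[OF i\<^sub>0(1)] by blast
  then have "admissible G" using sv domG by (simp add: admissible_def)
  moreover have "G \<noteq> M" using i\<^sub>0(2) dom by auto
  ultimately show ?thesis using \<open>M \<subseteq> G\<close> by blast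
qed

lemma exists_vector_many_nonzero_rows: "\<exists>c. supp c \<subseteq> Q \<and> \<not> |{i\<in>Q. row_value i c \<noteq> 0}| <o |Q|"
proof -
  have "\<forall>C\<in>chains {G. admissible G}. \<Union>C \<in> {G. admissible G}"
    using admissible_Union_chain by simp
  then have "\<exists>M\<in>{G. admissible G}. \<forall>G\<in>{G. admissible G}. M \<subseteq> G \<longrightarrow> G = M"
    by (rule Zorn_Lemma)
  then obtain M where M: "admissible M" and max: "\<And>G. admissible G \<Longrightarrow> M \<subseteq> G \<Longrightarrow> G = M"
    by blast
  have large: "\<not> |solved_rows M| <o |Q|"
  proof (rule notI)
    assume "|solved_rows M| <o |Q|"
    then have "|\<Union>i\<in>solved_rows M. {j. b i j \<noteq> 0}| <o |Q|"
      using infinite_Q by (rule card_of_UN_finite_ordLess) (rule row_finite)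
    moreover have "Domain M \<subseteq> (\<Union>i\<in>solved_rows M. {j. b i j \<noteq> 0})"
      using M by (simp add: admissible_def)
    ultimately have small: "|Domain M| <o |Q|" using card_of_mono1 ordLeq_ordLess_trans by blast
    have "\<not> Q \<subseteq> Domain M"
    proof
      assume "Q \<subseteq> Domain M"
      then have "|Q| \<le>o |Domain M|" by (rule card_of_mono1)
      with small show False using not_ordLess_ordLeq by blast
    qed
    then obtain i\<^sub>0 where "i\<^sub>0 \<in> Q" "i\<^sub>0 \<notin> Domain M" by blast
    then obtain G where "admissible G" "M \<subseteq> G" "G \<noteq> M" using admissible_extend[OF M] by blast
    with max show False by blast
  qed
  have "supp (graph_fun M) \<subseteq> Domain M"
    using graph_fun_outside[of _ M] by (auto simp: supp_def)
  then have "supp (graph_fun M) \<subseteq> Q" using M by (auto simp: admissible_def)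
  moreover have "solved_rows M \<subseteq> {i\<in>Q. row_value i (graph_fun M) \<noteq> 0}"
    by (auto simp: solved_rows_def)
  then have "\<not> |{i\<in>Q. row_value i (graph_fun M) \<noteq> 0}| <o |Q|"
    using large card_of_mono1 ordLeq_ordLess_trans by blast
  ultimately show ?thesis by blast
qed

end

section \<open>Diagonal families of functionals\<close>

locale diagonal_family =
  fixes \<Phi> :: "'a \<Rightarrow> ('a \<Rightarrow> int) \<Rightarrow> int"
  assumes additive: "additive (\<Phi> i)"
    and diagonal: "\<Phi> i (unit_vec i) \<noteq> 0"
begin

lemma residual_nonvanishing_in_block:
  assumes Q: "Q \<subseteq> J" "|Q| =o |J|" and J: "infinite J"
    and small: "\<And>c. supp c \<subseteq> J \<Longrightarrow> |{i\<in>J. \<Phi> i c \<noteq> 0}| <o |J|"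
  shows "\<exists>i\<in>Q. nonvanishing_on (residual (\<Phi> i)) (Q - {i})"
proof -
  have "infinite Q" using card_of_ordIso_finite[OF Q(2)] J by blast
  interpret M: row_finite_matrix "\<lambda>i j. \<Phi> i (unit_vec j)" Q
    using additive_finite_unit_support[OF additive] diagonal \<open>infinite Q\<close> by unfold_locales
  obtain c where c: "supp c \<subseteq> Q" and many: "\<not> |{i\<in>Q. M.row_value i c \<noteq> 0}| <o |Q|"
    using M.exists_vector_many_nonzero_rows by blast
  have "|{i\<in>J. \<Phi> i c \<noteq> 0}| <o |Q|"
    using small[of c] c Q ordLess_ordIso_trans ordIso_symmetric by blast
  then have "\<not> {i\<in>Q. M.row_value i c \<noteq> 0} \<subseteq> {i\<in>J. \<Phi> i c \<noteq> 0}"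
    using many card_of_mono1 ordLeq_ordLess_trans by blast
  then obtain i where i: "i \<in> Q" "M.row_value i c \<noteq> 0" "\<Phi> i c = 0" using Q(1) by blast
  then have "residual (\<Phi> i) c \<noteq> 0"
    by (simp add: residual_def coordinate_part_def M.row_value_def)
  define c' where "c' = (\<lambda>\<xi>. if \<xi> = i then 0 else c \<xi>)"
  have split: "c' + (\<lambda>\<xi>. c i * unit_vec i \<xi>) = c" by (auto simp: c'_def unit_vec_def fun_eq_iff)
  have "residual (\<Phi> i) (c' + (\<lambda>\<xi>. c i * unit_vec i \<xi>)) = residual (\<Phi> i) c'"
    using additive_scale[OF additive_residual[OF additive]] residual_unit_vec[OF additive]
    by (simp add: additive.add[OF additive_residual[OF additive]])
  then have "residual (\<Phi> i) c = residual (\<Phi> i) c'" unfolding split .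
  moreover have "supp c' \<subseteq> Q - {i}" using c by (auto simp: c'_def supp_def)
  ultimately show ?thesis
    using i(1) \<open>residual (\<Phi> i) c \<noteq> 0\<close> unfolding nonvanishing_on_def by metis
qed

text \<open>Split \<open>J\<close> into \<open>|J|\<close> blocks of size \<open>|J|\<close> and pick in each block a row whose residual
  lives on the rest of the block.\<close>

lemma equipotent_rows_with_outer_piece:
  assumes J: "infinite J" and small: "\<And>c. supp c \<subseteq> J \<Longrightarrow> |{i\<in>J. \<Phi> i c \<noteq> 0}| <o |J|"
  obtains J' where "J' \<subseteq> J" and "|J'| =o |J|"
    and "\<And>i. i \<in> J' \<Longrightarrow> \<exists>P. P \<subseteq> J - J' \<and> nonvanishing_on (residual (\<Phi> i)) P"
proof -
  obtain Q where QJ: "\<And>\<alpha>. \<alpha> \<in> J \<Longrightarrow> Q \<alpha> \<subseteq> J" and Q_card: "\<And>\<alpha>. \<alpha> \<in> J \<Longrightarrow> |Q \<alpha>| =o |J|"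
    and Q_disj: "\<And>\<alpha> \<beta>. \<alpha> \<in> J \<Longrightarrow> \<beta> \<in> J \<Longrightarrow> \<alpha> \<noteq> \<beta> \<Longrightarrow> Q \<alpha> \<inter> Q \<beta> = {}"
    using infinite_partition_equipotent[OF J] by metis
  have "\<forall>\<alpha>\<in>J. \<exists>i\<in>Q \<alpha>. nonvanishing_on (residual (\<Phi> i)) (Q \<alpha> - {i})"
    using residual_nonvanishing_in_block[OF QJ Q_card J small] by blast
  then obtain sel where sel: "\<And>\<alpha>. \<alpha> \<in> J \<Longrightarrow> sel \<alpha> \<in> Q \<alpha>"
    and sel_piece: "\<And>\<alpha>. \<alpha> \<in> J \<Longrightarrow> nonvanishing_on (residual (\<Phi> (sel \<alpha>))) (Q \<alpha> - {sel \<alpha>})"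
    by metis
  have sel_in: "sel \<beta> \<in> Q \<alpha> \<longleftrightarrow> \<beta> = \<alpha>" if "\<alpha> \<in> J" "\<beta> \<in> J" for \<alpha> \<beta>
    using sel Q_disj that by blast
  have "inj_on sel J" using sel_in sel by (intro inj_onI) metis
  have "sel ` J \<subseteq> J" using sel QJ by auto
  moreover from \<open>inj_on sel J\<close> have "|sel ` J| =o |J|"
    using card_of_ordIsoI[of sel J "sel ` J"] ordIso_symmetric by (simp add: bij_betw_def)
  moreover have "\<exists>P. P \<subseteq> J - sel ` J \<and> nonvanishing_on (residual (\<Phi> i)) P" if "i \<in> sel ` J" for i
  proof -
    obtain \<alpha> where \<alpha>: "\<alpha> \<in> J" "i = sel \<alpha>" using \<open>i \<in> sel ` J\<close> by blast
    have "Q \<alpha> - {i} \<subseteq> J - sel ` J" using QJ[OF \<alpha>(1)] sel_in[OF \<alpha>(1)] \<alpha>(2) by auto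
    then show ?thesis using sel_piece[OF \<alpha>(1)] \<alpha>(2) by blast
  qed
  ultimately show thesis by (rule that)
qed

text \<open>The rows \<open>J'\<close> of the previous lemma have one piece less inside \<open>J'\<close> than inside \<open>J\<close>,
  which drives an induction on the number of pieces.\<close>

lemma many_nonzero_values:
  assumes "infinite J" and "\<forall>i\<in>J. \<not> nonvanishing_pieces (residual (\<Phi> i)) J k"
  shows "\<exists>c. supp c \<subseteq> J \<and> \<not> |{i\<in>J. \<Phi> i c \<noteq> 0}| <o |J|"
  using assms
proof (induction k arbitrary: J)
  case 0
  have "nonvanishing_pieces \<psi> J 0" for \<psi>
    unfolding nonvanishing_pieces_def by (intro exI[of _ "{}"]) auto
  moreover obtain i where "i \<in> J" using 0 by (metis ex_in_conv finite.emptyI)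
  ultimately show ?case using 0 by blast
next
  case (Suc k)
  show ?case
  proof (rule ccontr)
    assume "\<not> ?case"
    then have small: "\<And>c. supp c \<subseteq> J \<Longrightarrow> |{i\<in>J. \<Phi> i c \<noteq> 0}| <o |J|" by blast
    obtain J' where J': "J' \<subseteq> J" "|J'| =o |J|"
      and outer: "\<And>i. i \<in> J' \<Longrightarrow> \<exists>P. P \<subseteq> J - J' \<and> nonvanishing_on (residual (\<Phi> i)) P"
      using equipotent_rows_with_outer_piece[OF Suc.prems(1) small] by blast
    have "infinite J'" using card_of_ordIso_finite[OF J'(2)] Suc.prems(1) by blast
    moreover have "\<forall>i\<in>J'. \<not> nonvanishing_pieces (residual (\<Phi> i)) J' k"
    proof (intro ballI notI)
      fix i assume i: "i \<in> J'" and pieces: "nonvanishing_pieces (residual (\<Phi> i)) J' k"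
      then have "nonvanishing_pieces (residual (\<Phi> i)) J (Suc k)"
        using outer nonvanishing_pieces_insert[OF additive_residual[OF additive] pieces J'(1)] by blast
      then show False using Suc.prems(2) i J'(1) by blast
    qed
    ultimately obtain c where c: "supp c \<subseteq> J'" and many: "\<not> |{i\<in>J'. \<Phi> i c \<noteq> 0}| <o |J'|"
      using Suc.IH by blast
    have "|{i\<in>J. \<Phi> i c \<noteq> 0}| <o |J'|"
      using small[of c] c J'(1) ordLess_ordIso_trans[OF _ ordIso_symmetric[OF J'(2)]] by blast
    moreover have "{i\<in>J'. \<Phi> i c \<noteq> 0} \<subseteq> {i\<in>J. \<Phi> i c \<noteq> 0}" using J'(1) by blast
    ultimately show False using many card_of_mono1 ordLeq_ordLess_trans by blast
  qed
qed

definition level :: "nat \<Rightarrow> 'a set" where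
  "level k = {i. \<not> nonvanishing_pieces (residual (\<Phi> i)) UNIV k}"

lemma UN_level: "(\<Union>k. level k) = UNIV"
  using additive_finite_pieces[OF additive_residual[OF additive]] by (auto simp: level_def)

lemma level_pieces: "i \<in> level k \<Longrightarrow> S \<subseteq> level k \<Longrightarrow> \<not> nonvanishing_pieces (residual (\<Phi> i)) S k"
  using nonvanishing_pieces_mono[of k k S UNIV] by (auto simp: level_def)

definition block :: "'a set \<Rightarrow> ('a \<Rightarrow> int) \<Rightarrow> nat \<Rightarrow> 'a set" where
  "block X c b = {i. i \<notin> X \<and> \<Phi> i c \<noteq> 0 \<and> \<bar>\<Phi> i c\<bar> \<le> int b}"

lemma exists_fresh_block:
  assumes uncountable: "\<not> countable (UNIV :: 'a set)"
    and small_level: "\<And>k. |level k| <o |UNIV :: 'a set|"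
    and X: "|X| <o |UNIV :: 'a set|" and Y: "|Y :: 'a set| <o |UNIV :: 'a set|"
  shows "\<exists>c b. supp c \<inter> X = {} \<and> |supp c| <o |UNIV :: 'a set|
    \<and> infinite (block X c b) \<and> |Y| \<le>o |block X c b|"
proof -
  have inf: "infinite (UNIV :: 'a set)" using uncountable countable_finite by blast
  obtain S where S: "X \<union> Y \<subseteq> S" "infinite S" "|S| <o |UNIV :: 'a set|"
    using uncountable_small_infinite_superset[OF uncountable card_of_Un_ordLess_infinite[OF inf X Y]]
    by blast
  have "|S| <o |\<Union>k. level k|" using S(3) by (simp add: UN_level)
  then obtain k where k: "|S| <o |level k|" using card_of_ordLess_UN_nat[OF S(2)] by blast
  define J where "J = level k - X"
  have J_big: "|S| <o |J|"
    unfolding J_def using S(1) by (intro card_of_ordLess_Diff[OF S(2) k] card_of_mono1) blast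
  have "infinite J" using card_of_ordLeq_finite[OF ordLess_imp_ordLeq[OF J_big]] S(2) by blast
  moreover have "\<forall>i\<in>J. \<not> nonvanishing_pieces (residual (\<Phi> i)) J k"
    using level_pieces by (auto simp: J_def)
  ultimately obtain c where c: "supp c \<subseteq> J" and many: "\<not> |{i\<in>J. \<Phi> i c \<noteq> 0}| <o |J|"
    using many_nonzero_values by blast
  define A where "A b = {i\<in>J. \<Phi> i c \<noteq> 0 \<and> \<bar>\<Phi> i c\<bar> \<le> int b}" for b :: nat
  have "{i\<in>J. \<Phi> i c \<noteq> 0} \<subseteq> (\<Union>b. A b)"
  proof
    fix i assume "i \<in> {i\<in>J. \<Phi> i c \<noteq> 0}"
    then have "i \<in> A (nat \<bar>\<Phi> i c\<bar>)" by (simp add: A_def)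
    then show "i \<in> (\<Union>b. A b)" by blast
  qed
  then have "|J| \<le>o |\<Union>b. A b|"
    using many not_card_of_ordLess_iff card_of_mono1 ordLeq_transitive by blast
  then obtain b where b: "|S| <o |A b|"
    using card_of_ordLess_UN_nat[OF S(2)] J_big ordLess_ordLeq_trans by blast
  have "A b \<subseteq> block X c b" by (auto simp: A_def J_def block_def)
  then have blk: "|S| <o |block X c b|" using b card_of_mono1 ordLess_ordLeq_trans by blast
  have "|Y| \<le>o |S|" using S(1) by (intro card_of_mono1) blast
  then have "|Y| \<le>o |block X c b|" using blk ordLess_imp_ordLeq ordLeq_transitive by blast
  moreover have "infinite (block X c b)"
    using card_of_ordLeq_finite[OF ordLess_imp_ordLeq[OF blk]] S(2) by blast
  moreover have "supp c \<inter> X = {}" using c by (auto simp: J_def)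
  moreover have "|supp c| <o |UNIV :: 'a set|"
    using c small_level[of k] card_of_mono1[of "supp c" "level k"] ordLeq_ordLess_trans
    by (auto simp: J_def)
  ultimately show ?thesis by blast
qed

lemma fresh_block_sequence:
  assumes uncountable: "\<not> countable (UNIV :: 'a set)"
    and small_image: "\<And>c. |{i. \<Phi> i c \<noteq> 0}| <o |UNIV :: 'a set|"
    and small_level: "\<And>k. |level k| <o |UNIV :: 'a set|"
  obtains y :: "nat \<Rightarrow> 'a \<Rightarrow> int" and \<beta> :: "nat \<Rightarrow> nat" and B :: "nat \<Rightarrow> 'a set"
  where "disjoint_family (\<lambda>n. supp (y n))" and "\<And>n. infinite (B n)" and "\<And>n. |level n| \<le>o |B n|"
    and "\<And>n i. i \<in> B n \<Longrightarrow> \<Phi> i (y n) \<noteq> 0 \<and> \<bar>\<Phi> i (y n)\<bar> \<le> int (\<beta> n)"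
    and "\<And>m n i. i \<in> B n \<Longrightarrow> m < n \<Longrightarrow> \<Phi> i (y m) = 0"
proof -
  have inf: "infinite (UNIV :: 'a set)" using uncountable countable_finite by blast
  have "\<forall>n X. \<exists>c b. |X| <o |UNIV :: 'a set| \<longrightarrow> supp c \<inter> X = {} \<and> |supp c| <o |UNIV :: 'a set|
      \<and> infinite (block X c b) \<and> |level n| \<le>o |block X c b|"
    using exists_fresh_block[OF uncountable small_level _ small_level] by blast
  then obtain c b where cb: "\<And>n X. |X| <o |UNIV :: 'a set| \<Longrightarrow> supp (c n X) \<inter> X = {}
      \<and> |supp (c n X)| <o |UNIV :: 'a set| \<and> infinite (block X (c n X) (b n X))
      \<and> |level n| \<le>o |block X (c n X) (b n X)|"
    by metis
  define X where "X = rec_nat {} (\<lambda>n X. X \<union> supp (c n X) \<union> {i. \<Phi> i (c n X) \<noteq> 0})"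
  define y where "y n = c n (X n)" for n
  define \<beta> where "\<beta> n = b n (X n)" for n
  have X_Suc: "X (Suc n) = X n \<union> supp (y n) \<union> {i. \<Phi> i (y n) \<noteq> 0}" for n
    by (simp add: X_def y_def)
  have X_small: "|X n| <o |UNIV :: 'a set|" for n
  proof (induction n)
    case 0
    show ?case using inf by (simp add: X_def card_of_ordLess_if_finite)
  next
    case (Suc n)
    then have "|supp (y n)| <o |UNIV :: 'a set|" using cb by (simp add: y_def)
    then show ?case
      unfolding X_Suc by (intro card_of_Un_ordLess_infinite inf Suc.IH small_image)
  qed
  have fresh: "supp (y n) \<inter> X n = {}" and blk_inf: "infinite (block (X n) (y n) (\<beta> n))"
    and blk_big: "|level n| \<le>o |block (X n) (y n) (\<beta> n)|" for n
    using cb[OF X_small] by (simp_all add: y_def \<beta>_def)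
  have X_mono: "supp (y m) \<union> {i. \<Phi> i (y m) \<noteq> 0} \<subseteq> X n" if "m < n" for m n
    using that by (induction n) (auto simp: X_Suc less_Suc_eq)
  have disj: "disjoint_family (\<lambda>n. supp (y n))"
    by (rule disjoint_family_if_disjoint_from_earlier[where X = X]) (use fresh X_mono in blast)+
  have earlier: "\<Phi> i (y m) = 0" if "i \<in> block (X n) (y n) (\<beta> n)" "m < n" for m n i
    using that X_mono[OF that(2)] by (auto simp: block_def)
  have bounded: "\<Phi> i (y n) \<noteq> 0 \<and> \<bar>\<Phi> i (y n)\<bar> \<le> int (\<beta> n)"
    if "i \<in> block (X n) (y n) (\<beta> n)" for n i
    using that by (simp add: block_def)
  show thesis
    by (rule that[of y "\<lambda>n. block (X n) (y n) (\<beta> n)" \<beta>, OF disj blk_inf blk_big bounded earlier])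
qed

text \<open>A single series in the vectors of the previous lemma, with moduli
  \<open>\<Prod>m<n. \<beta> m + 1\<close>, has at least \<open>|level n|\<close> nonzero values for every \<open>n\<close>.\<close>

lemma exists_large_level:
  assumes uncountable: "\<not> countable (UNIV :: 'a set)"
    and small_image: "\<And>c. |{i. \<Phi> i c \<noteq> 0}| <o |UNIV :: 'a set|"
  shows "\<exists>k. \<not> |level k| <o |UNIV :: 'a set|"
proof (rule ccontr)
  assume "\<nexists>k. \<not> |level k| <o |UNIV :: 'a set|"
  then have "\<And>k. |level k| <o |UNIV :: 'a set|" by blast
  then obtain y \<beta> B where disj: "disjoint_family (\<lambda>n. supp (y n))"
    and B_inf: "\<And>n. infinite (B n)" and B_big: "\<And>n. |level n| \<le>o |B n|"
    and bounded: "\<And>n i. i \<in> B n \<Longrightarrow> \<Phi> i (y n) \<noteq> 0 \<and> \<bar>\<Phi> i (y n)\<bar> \<le> int (\<beta> n)"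
    and earlier: "\<And>m n i. i \<in> B n \<Longrightarrow> m < n \<Longrightarrow> \<Phi> i (y m) = 0"
    using fresh_block_sequence[OF uncountable small_image] by metis
  define x where "x = series y (\<lambda>n. \<Prod>m<n. int (\<beta> m) + 1)"
  have B_sub: "B n \<subseteq> {i. \<Phi> i x \<noteq> 0}" for n
  proof
    fix i assume i: "i \<in> B n"
    have "\<Phi> i x \<noteq> 0"
      unfolding x_def using bounded[OF i] earlier[OF i]
      by (intro additive_series_nonzero[OF additive[of i] disj, where b = \<beta> and n = n]) auto
    then show "i \<in> {i. \<Phi> i x \<noteq> 0}" by simp
  qed
  have "|\<Union>n. level n| \<le>o |{i. \<Phi> i x \<noteq> 0}|"
  proof (rule card_of_UN_nat_ordLeq)
    show "infinite {i. \<Phi> i x \<noteq> 0}" using B_inf B_sub finite_subset by blast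
    show "|level n| \<le>o |{i. \<Phi> i x \<noteq> 0}|" for n
      using B_big card_of_mono1[OF B_sub] ordLeq_transitive by blast
  qed
  then have "|UNIV :: 'a set| <o |UNIV :: 'a set|"
    unfolding UN_level using small_image by (rule ordLeq_ordLess_trans)
  then show False using ordLess_irreflexive by blast
qed

text \<open>In the countable case all residuals vanish, so every row lies in \<open>level 1\<close>.\<close>

lemma exists_vector_large_image:
  assumes inf: "infinite (UNIV :: 'a set)"
  shows "\<exists>c. \<not> |{i. \<Phi> i c \<noteq> 0}| <o |UNIV :: 'a set|"
proof (rule ccontr)
  assume "\<nexists>c. \<not> |{i. \<Phi> i c \<noteq> 0}| <o |UNIV :: 'a set|"
  then have small_image: "\<And>c. |{i. \<Phi> i c \<noteq> 0}| <o |UNIV :: 'a set|" by blast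
  obtain k where k: "\<not> |level k| <o |UNIV :: 'a set|"
  proof (cases "countable (UNIV :: 'a set)")
    case True
    have "residual (\<Phi> i) c = 0" for i c
      using countable_subset[OF subset_UNIV True] by (rule additive_vanishes_on_countable_support
        [OF additive_residual[OF additive] residual_unit_vec[OF additive]])
    then have "\<not> nonvanishing_pieces (residual (\<Phi> i)) UNIV 1" for i
      by (auto simp: nonvanishing_pieces_def nonvanishing_on_def Suc_le_eq card_gt_0_iff)
    then have "level 1 = UNIV" by (auto simp: level_def)
    then show ?thesis using that[of 1] ordLess_irreflexive by auto
  next
    case False
    then show ?thesis using exists_large_level[OF False small_image] that by blast
  qed
  have "infinite (level k)" using k inf card_of_ordLess_if_finite by blast
  then obtain c where "\<not> |{i\<in>level k. \<Phi> i c \<noteq> 0}| <o |level k|"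
    using many_nonzero_values level_pieces by blast
  then have "|level k| \<le>o |{i. \<Phi> i c \<noteq> 0}|"
    using not_card_of_ordLess_iff card_of_mono1[of "{i\<in>level k. \<Phi> i c \<noteq> 0}" "{i. \<Phi> i c \<noteq> 0}"]
      ordLeq_transitive by blast
  moreover have "|UNIV :: 'a set| \<le>o |level k|" using k not_card_of_ordLess_iff by blast
  ultimately have "|UNIV :: 'a set| \<le>o |{i. \<Phi> i c \<noteq> 0}|" using ordLeq_transitive by blast
  then show False using small_image[of c] not_ordLess_ordLeq by blast
qed

end

lemma diagonal_family_of_injective:
  fixes f :: "('a \<Rightarrow> int) \<Rightarrow> 'l \<Rightarrow> int"
  assumes coordinate: "\<And>\<eta>. additive (\<lambda>x. f x \<eta>)" and inj: "inj f"
  obtains \<eta> where "diagonal_family (\<lambda>i x. f x (\<eta> i))"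
proof -
  have "unit_vec j \<noteq> 0" for j :: 'a by (auto simp: unit_vec_def fun_eq_iff)
  then have "f (unit_vec j) \<noteq> f 0" for j by (simp add: inj_eq[OF inj])
  then have "\<exists>\<eta>. f (unit_vec j) \<eta> \<noteq> 0" for j
    using additive.zero[OF coordinate] by (auto simp: fun_eq_iff)
  then obtain \<eta> where "\<And>j. f (unit_vec j) (\<eta> j) \<noteq> 0" by metis
  then show thesis by (intro that diagonal_family.intro coordinate)
qed

theorem mainTheorem8:
  assumes "infinite (UNIV :: 'b set)"
    and "infinite (UNIV :: 'l set)"
    and "(card_of (UNIV :: 'b set), cardSuc (card_of (UNIV :: 'l set))) \<in> ordLeq"
  shows "\<not> (\<exists>f :: ('b \<Rightarrow> int) \<Rightarrow> ('l \<Rightarrow> int).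
            inj f
          \<and> (\<forall>x y. f (\<lambda>\<xi>. x \<xi> + y \<xi>) = (\<lambda>\<eta>. f x \<eta> + f y \<eta>))
          \<and> range f \<subseteq> Pset TYPE('b))"
proof (intro notI, elim exE conjE)
  fix f :: "('b \<Rightarrow> int) \<Rightarrow> ('l \<Rightarrow> int)"
  assume inj: "inj f" and add: "\<forall>x y. f (\<lambda>\<xi>. x \<xi> + y \<xi>) = (\<lambda>\<eta>. f x \<eta> + f y \<eta>)"
    and range: "range f \<subseteq> Pset TYPE('b)"
  have coordinate: "additive (\<lambda>x. f x \<eta>)" for \<eta>
    using add by unfold_locales (simp add: plus_fun_def)
  obtain \<eta> where "diagonal_family (\<lambda>i x. f x (\<eta> i))"
    using diagonal_family_of_injective[OF coordinate inj] .
  then interpret diagonal_family "\<lambda>i x. f x (\<eta> i)" .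
  obtain c where c: "\<not> |{i. f c (\<eta> i) \<noteq> 0}| <o |UNIV :: 'b set|"
    using exists_vector_large_image[OF assms(1)] by blast
  have "{i. f c (\<eta> i) \<noteq> 0} \<subseteq> (\<Union>e\<in>supp (f c). {j. f (unit_vec j) e \<noteq> 0})"
    using diagonal by (auto simp: supp_def)
  moreover have "|\<Union>e\<in>supp (f c). {j. f (unit_vec j) e \<noteq> 0}| <o |UNIV :: 'b set|"
    using range assms(1) by (intro card_of_UN_finite_ordLess additive_finite_unit_support[OF coordinate])
      (auto simp: Pset_def)
  ultimately show False using c card_of_mono1 ordLeq_ordLess_trans by blast
qed

end
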